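(* Let $n$ be even, $k\ge 2$. A function $f(x)=a_0(x)+2a_1(x)+\cdots+2^{k-1}a_{k-1}(x)$ from $\mathbb{V}_n$ to $\mathbb{Z}_{2^k}$ (with Boolean $a_j$) is gbent if and only if $\mathcal{A}=a_{k-1}\oplus\langle a_0,a_1,\ldots,a_{k-2}\rangle$ is an affine space consisting of bent functions such that for every pairwise distinct $g_i,g_j,g_l\in\mathcal{A}$ the function $g_ig_j\oplus g_ig_l\oplus g_jg_l$ is bent.
   Context: $\mathbb{V}_n$ is an $n$-dimensional $\mathbb{F}_2$-vector space with inner product $u\cdot x$. A Boolean $g$ is bent if $|\sum_x(-1)^{g(x)\oplus u\cdot x}|=2^{n/2}$ for all $u$. $\langle\cdot\rangle$ denotes $\mathbb{F}_2$-span of Boolean functions and $a\oplus L=\{a\oplus h:h\in L\}$. $f$ is gbent if $|\sum_x\zeta_{2^k}^{f(x)}(-1)^{u\cdot x}|=2^{n/2}$ for all $u$, where $\zeta_{2^k}=e^{2\pi i/2^k}$. *)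

theory Defs
  imports Complex_Main
begin

definition Vn :: "nat \<Rightarrow> (nat \<Rightarrow> bool) set" where
  "Vn n = {x. \<forall>i\<ge>n. \<not> x i}"

definition ip :: "nat \<Rightarrow> (nat \<Rightarrow> bool) \<Rightarrow> (nat \<Rightarrow> bool) \<Rightarrow> bool" where
  "ip n u x = odd (card {i. i < n \<and> u i \<and> x i})"

definition bent :: "nat \<Rightarrow> ((nat \<Rightarrow> bool) \<Rightarrow> bool) \<Rightarrow> bool" where
  "bent n g \<longleftrightarrow> (\<forall>u\<in>Vn n.
     \<bar>\<Sum>x\<in>Vn n. (-1::real) ^ of_bool (g x \<noteq> ip n u x)\<bar> = 2 powr (real n / 2))"

text \<open>A function f from V_n to Z_{2^k} (values taken as naturals, read mod 2^k) is gbent.\<close>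
definition gbent :: "nat \<Rightarrow> nat \<Rightarrow> ((nat \<Rightarrow> bool) \<Rightarrow> nat) \<Rightarrow> bool" where
  "gbent n k f \<longleftrightarrow> (\<forall>u\<in>Vn n.
     cmod (\<Sum>x\<in>Vn n. cis (2 * pi * real (f x) / 2 ^ k) * (-1) ^ of_bool (ip n u x))
       = 2 powr (real n / 2))"

text \<open>Restriction of a Boolean function to V_n (so that equality of functions means
  equality on V_n).\<close>
definition restrV :: "nat \<Rightarrow> ((nat \<Rightarrow> bool) \<Rightarrow> bool) \<Rightarrow> (nat \<Rightarrow> bool) \<Rightarrow> bool" where
  "restrV n g = (\<lambda>x. if x \<in> Vn n then g x else False)"

definition span2 :: "nat \<Rightarrow> (nat \<Rightarrow> (nat \<Rightarrow> bool) \<Rightarrow> bool) \<Rightarrow> nat set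
                     \<Rightarrow> ((nat \<Rightarrow> bool) \<Rightarrow> bool) set" where
  "span2 n a J = {restrV n (\<lambda>x. odd (card {j\<in>S. a j x})) | S. S \<subseteq> J}"

definition xor_coset :: "nat \<Rightarrow> ((nat \<Rightarrow> bool) \<Rightarrow> bool) \<Rightarrow> ((nat \<Rightarrow> bool) \<Rightarrow> bool) set
                         \<Rightarrow> ((nat \<Rightarrow> bool) \<Rightarrow> bool) set" where
  "xor_coset n b L = {restrV n (\<lambda>x. b x \<noteq> h x) | h. h \<in> L}"

end

theory Submission
  imports Defs "HOL-Computational_Algebra.Polynomial"
begin

text \<open>Write \<open>k = m + 1\<close> and \<open>\<zeta> = e^(i \<pi> / 2^m)\<close>. Grouping the points \<open>x\<close> by their low bits
  \<open>Y = {j < m. a_j x}\<close>, the generalized Walsh value of \<open>f\<close> at \<open>u\<close> becomes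
  \<open>\<Sum>_Y \<zeta>^(bin Y) N_u(Y)\<close> with integers \<open>N_u(Y)\<close>, and the Walsh values of the coset elements
  \<open>a_m \<oplus> (\<Oplus>_(j \<in> S) a_j)\<close> form the Hadamard transform of \<open>N_u\<close>. As \<open>1 + X^(2^m)\<close> is irreducible
  (Eisenstein at \<open>X + 1\<close>) and \<open>2\<close> is totally ramified in \<open>\<int>[\<zeta>]\<close>, such a sum has absolute value
  \<open>2^(n/2)\<close> exactly when \<open>N_u\<close> is \<open>\<plusminus>2^(n/2)\<close> at a single point. By Fourier inversion this
  holds iff all Hadamard values have absolute value \<open>2^(n/2)\<close> and their signs form a character,
  i.e. are multiplicative on symmetric differences; by
  \<open>2 W(g_i g_j \<oplus> g_i g_l \<oplus> g_j g_l) = W(g_i) + W(g_j) + W(g_l) - W(g_i \<oplus> g_j \<oplus> g_l)\<close>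
  the latter is the bentness of the majority functions.\<close>

section \<open>Characters of \<open>\<bbbF>_2^m\<close> and the Hadamard transform\<close>

definition walsh_char :: "nat set \<Rightarrow> nat set \<Rightarrow> int" where
  "walsh_char S Y = (-1) ^ card (S \<inter> Y)"

lemma odd_card_sym_diff:
  assumes "finite A" "finite B"
  shows "odd (card (sym_diff A B)) \<longleftrightarrow> odd (card A) \<noteq> odd (card B)"
proof -
  have "card (sym_diff A B) = card (A - B) + card (B - A)"
    using assms by (intro card_Un_disjoint) auto
  moreover have "card A = card (A - B) + card (A \<inter> B)" "card B = card (B - A) + card (A \<inter> B)"
    using assms card_Int_Diff[of A B] card_Int_Diff[of B A] by (simp_all add: Int_commute)
  ultimately show ?thesis by auto
qed

lemma walsh_char_sym_diff_left:
  assumes "finite S" "finite T"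
  shows "walsh_char (sym_diff S T) Y = walsh_char S Y * walsh_char T Y"
proof -
  have "sym_diff S T \<inter> Y = sym_diff (S \<inter> Y) (T \<inter> Y)" by blast
  then show ?thesis
    using odd_card_sym_diff[of "S \<inter> Y" "T \<inter> Y"] assms
    by (simp add: walsh_char_def minus_one_power_iff)
qed

lemma walsh_char_sym_diff_right:
  assumes "finite S"
  shows "walsh_char S (sym_diff Y Z) = walsh_char S Y * walsh_char S Z"
proof -
  have "S \<inter> sym_diff Y Z = sym_diff (S \<inter> Y) (S \<inter> Z)" by blast
  then show ?thesis
    using odd_card_sym_diff[of "S \<inter> Y" "S \<inter> Z"] assms
    by (simp add: walsh_char_def minus_one_power_iff)
qed

lemma walsh_char_cases: "walsh_char S Y = 1 \<or> walsh_char S Y = -1"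
  by (simp add: walsh_char_def minus_one_power_iff)

lemma sum_Pow_minus_one_power_card_Int:
  fixes A D :: "'a set"
  assumes "finite A" "D \<subseteq> A"
  shows "(\<Sum>S\<in>Pow A. (-1::int) ^ card (S \<inter> D)) = (if D = {} then 2 ^ card A else 0)"
proof -
  define f :: "'a \<Rightarrow> int" where "f i = (if i \<in> D then -1 else 1)" for i
  have "(-1::int) ^ card (S \<inter> D) = (\<Prod>i\<in>S. f i) * (\<Prod>i\<in>A - S. 1)" if "S \<in> Pow A" for S
    using that \<open>finite A\<close> finite_subset[of S A]
    by (simp add: f_def prod.If_cases Int_commute)
  then have "(\<Sum>S\<in>Pow A. (-1::int) ^ card (S \<inter> D)) = (\<Prod>i\<in>A. f i + 1)"
    by (simp add: prod_add[OF \<open>finite A\<close>])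
  also have "\<dots> = (if D = {} then 2 ^ card A else 0)"
    using assms by (auto simp: f_def intro: prod_zero)
  finally show ?thesis .
qed

lemma sum_walsh_char_orthogonal:
  assumes "Y \<subseteq> {..<m}" "Z \<subseteq> {..<m}"
  shows "(\<Sum>S\<in>Pow {..<m}. walsh_char S Y * walsh_char S Z) = (if Y = Z then 2 ^ m else 0)"
proof -
  have "(\<Sum>S\<in>Pow {..<m}. walsh_char S Y * walsh_char S Z)
      = (\<Sum>S\<in>Pow {..<m}. (-1) ^ card (S \<inter> sym_diff Y Z))"
    by (intro sum.cong refl)
      (metis PowD finite_lessThan finite_subset walsh_char_def walsh_char_sym_diff_right)
  also have "\<dots> = (if sym_diff Y Z = {} then 2 ^ m else 0)"
    using assms by (subst sum_Pow_minus_one_power_card_Int) auto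
  also have "sym_diff Y Z = {} \<longleftrightarrow> Y = Z" by blast
  finally show ?thesis by simp
qed

definition hadamard :: "nat \<Rightarrow> (nat set \<Rightarrow> int) \<Rightarrow> nat set \<Rightarrow> int" where
  "hadamard m N S = (\<Sum>Y\<in>Pow {..<m}. walsh_char S Y * N Y)"

lemma hadamard_inversion:
  assumes "Y \<subseteq> {..<m}"
  shows "(\<Sum>S\<in>Pow {..<m}. walsh_char S Y * hadamard m N S) = 2 ^ m * N Y"
proof -
  have "(\<Sum>S\<in>Pow {..<m}. walsh_char S Y * hadamard m N S)
      = (\<Sum>Z\<in>Pow {..<m}. N Z * (\<Sum>S\<in>Pow {..<m}. walsh_char S Y * walsh_char S Z))"
    unfolding hadamard_def sum_distrib_left
    by (subst sum.swap) (simp add: sum_distrib_left algebra_simps)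
  also have "\<dots> = (\<Sum>Z\<in>Pow {..<m}. if Z = Y then 2 ^ m * N Y else 0)"
    using assms by (intro sum.cong refl) (auto simp: sum_walsh_char_orthogonal)
  finally show ?thesis using assms by simp
qed

lemma hadamard_point_mass:
  assumes "Y0 \<subseteq> {..<m}" "\<And>Y. Y \<subseteq> {..<m} \<Longrightarrow> N Y = (if Y = Y0 then e else 0)"
  shows "hadamard m N S = e * walsh_char S Y0"
proof -
  have "hadamard m N S = (\<Sum>Y\<in>Pow {..<m}. if Y = Y0 then e * walsh_char S Y0 else 0)"
    unfolding hadamard_def using assms(2) by (intro sum.cong refl) auto
  then show ?thesis using assms(1) by simp
qed

lemma multiplicative_sign_is_walsh_char:
  fixes \<epsilon> :: "nat set \<Rightarrow> int"
  assumes sign: "\<And>S. S \<subseteq> {..<m} \<Longrightarrow> \<epsilon> S = 1 \<or> \<epsilon> S = -1"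
    and mult: "\<And>S T. S \<subseteq> {..<m} \<Longrightarrow> T \<subseteq> {..<m} \<Longrightarrow>
                 \<epsilon> (sym_diff S T) * \<epsilon> {} = \<epsilon> S * \<epsilon> T"
  obtains Y0 where "Y0 \<subseteq> {..<m}" "\<And>S. S \<subseteq> {..<m} \<Longrightarrow> \<epsilon> S = \<epsilon> {} * walsh_char S Y0"
proof
  define Y0 where "Y0 = {i \<in> {..<m}. \<epsilon> {i} \<noteq> \<epsilon> {}}"
  show "Y0 \<subseteq> {..<m}" by (auto simp: Y0_def)
  have unit: "\<epsilon> {} * \<epsilon> {} = 1" using sign[of "{}"] by auto
  show "\<epsilon> S = \<epsilon> {} * walsh_char S Y0" if "S \<subseteq> {..<m}" for S
  proof -
    have "finite S" using that finite_subset by blast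
    then show ?thesis using that
    proof (induction S rule: finite_induct)
      case empty
      then show ?case by (simp add: walsh_char_def)
    next
      case (insert i S)
      have i: "i < m" and S: "S \<subseteq> {..<m}" using insert.prems by auto
      have ins: "insert i S = sym_diff {i} S" using insert.hyps(2) by auto
      have "\<epsilon> {i} = \<epsilon> {} * walsh_char {i} Y0"
        using sign[of "{i}"] sign[of "{}"] i by (auto simp: Y0_def walsh_char_def)
      then have "\<epsilon> (insert i S) * \<epsilon> {} = \<epsilon> {} * walsh_char (insert i S) Y0 * \<epsilon> {}"
        unfolding ins using mult[of "{i}" S] i S insert.IH[OF S] insert.hyps(1)
        by (simp add: walsh_char_sym_diff_left algebra_simps)
      then show ?case using unit by (metis mult.assoc mult.right_neutral)
    qed
  qed
qed

lemma abs_sum3_minus_sign_eq_2_iff: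
  fixes a b c d :: int
  assumes "a = 1 \<or> a = -1" "b = 1 \<or> b = -1" "c = 1 \<or> c = -1" "d = 1 \<or> d = -1"
  shows "\<bar>a + b + c - d\<bar> = 2 \<longleftrightarrow> d = a * b * c"
  using assms by (elim disjE) simp_all

definition signed_point_mass :: "nat \<Rightarrow> int \<Rightarrow> (nat set \<Rightarrow> int) \<Rightarrow> bool" where
  "signed_point_mass m H N \<longleftrightarrow>
     (\<exists>Y0\<subseteq>{..<m}. \<exists>e. \<bar>e\<bar> = H \<and> (\<forall>Y\<subseteq>{..<m}. N Y = (if Y = Y0 then e else 0)))"

lemma hadamard_of_signed_point_mass:
  assumes "signed_point_mass m H N"
  shows "\<forall>S\<subseteq>{..<m}. \<bar>hadamard m N S\<bar> = H"
    and "\<forall>S1\<subseteq>{..<m}. \<forall>S2\<subseteq>{..<m}. \<forall>S3\<subseteq>{..<m}. \<bar>hadamard m N S1 + hadamard m N S2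
           + hadamard m N S3 - hadamard m N (sym_diff (sym_diff S1 S2) S3)\<bar> = 2 * H"
proof -
  obtain Y0 e where Y0: "Y0 \<subseteq> {..<m}" and e: "\<bar>e\<bar> = H"
    and N: "\<And>Y. Y \<subseteq> {..<m} \<Longrightarrow> N Y = (if Y = Y0 then e else 0)"
    using assms unfolding signed_point_mass_def by blast
  have had: "hadamard m N S = e * walsh_char S Y0" for S
    using hadamard_point_mass[OF Y0 N] by blast
  have "\<bar>walsh_char S Y0\<bar> = 1" for S using walsh_char_cases[of S Y0] by auto
  then show "\<forall>S\<subseteq>{..<m}. \<bar>hadamard m N S\<bar> = H"
    by (simp add: had abs_mult e)
  show "\<forall>S1\<subseteq>{..<m}. \<forall>S2\<subseteq>{..<m}. \<forall>S3\<subseteq>{..<m}. \<bar>hadamard m N S1 + hadamard m N S2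
           + hadamard m N S3 - hadamard m N (sym_diff (sym_diff S1 S2) S3)\<bar> = 2 * H"
  proof (intro allI impI)
    fix S1 S2 S3 :: "nat set"
    assume "S1 \<subseteq> {..<m}" "S2 \<subseteq> {..<m}" "S3 \<subseteq> {..<m}"
    then have "finite S1" "finite S2" "finite S3" by (auto intro: finite_subset)
    then have "walsh_char (sym_diff (sym_diff S1 S2) S3) Y0
             = walsh_char S1 Y0 * walsh_char S2 Y0 * walsh_char S3 Y0"
      by (simp add: walsh_char_sym_diff_left)
    then have "\<bar>walsh_char S1 Y0 + walsh_char S2 Y0 + walsh_char S3 Y0
               - walsh_char (sym_diff (sym_diff S1 S2) S3) Y0\<bar> = 2"
      using abs_sum3_minus_sign_eq_2_iff walsh_char_cases by metis
    then show "\<bar>hadamard m N S1 + hadamard m N S2 + hadamard m N S3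
               - hadamard m N (sym_diff (sym_diff S1 S2) S3)\<bar> = 2 * H"
      using e by (simp add: had abs_mult flip: distrib_left right_diff_distrib)
  qed
qed

lemma signed_point_mass_of_hadamard:
  assumes "H > 0"
    and abs: "\<And>S. S \<subseteq> {..<m} \<Longrightarrow> \<bar>hadamard m N S\<bar> = H"
    and triple: "\<And>S T. S \<subseteq> {..<m} \<Longrightarrow> T \<subseteq> {..<m} \<Longrightarrow>
       \<bar>hadamard m N S + hadamard m N T + hadamard m N {} - hadamard m N (sym_diff S T)\<bar> = 2 * H"
  shows "signed_point_mass m H N"
proof -
  define \<epsilon> where "\<epsilon> S = sgn (hadamard m N S)" for S
  have had: "hadamard m N S = H * \<epsilon> S" if "S \<subseteq> {..<m}" for S
    using abs[OF that] by (metis \<epsilon>_def abs_mult_sgn)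
  have sign: "\<epsilon> S = 1 \<or> \<epsilon> S = -1" if "S \<subseteq> {..<m}" for S
    using abs[OF that] \<open>H > 0\<close> by (auto simp: \<epsilon>_def sgn_if)
  have "\<epsilon> (sym_diff S T) * \<epsilon> {} = \<epsilon> S * \<epsilon> T" if "S \<subseteq> {..<m}" "T \<subseteq> {..<m}" for S T
  proof -
    have ST: "sym_diff S T \<subseteq> {..<m}" using that by blast
    have "hadamard m N S + hadamard m N T + hadamard m N {} - hadamard m N (sym_diff S T)
        = H * (\<epsilon> S + \<epsilon> T + \<epsilon> {} - \<epsilon> (sym_diff S T))"
      unfolding had[OF that(1)] had[OF that(2)] had[OF ST] had[OF empty_subsetI] by (simp add: algebra_simps)
    then have "\<bar>H * (\<epsilon> S + \<epsilon> T + \<epsilon> {} - \<epsilon> (sym_diff S T))\<bar> = H * 2"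
      using triple[OF that] by simp
    then have "\<epsilon> (sym_diff S T) = \<epsilon> S * \<epsilon> T * \<epsilon> {}"
      using abs_sum3_minus_sign_eq_2_iff sign that ST \<open>H > 0\<close> by (simp add: abs_mult)
    then show ?thesis using sign[of "{}"] by auto
  qed
  then obtain Y0 where Y0: "Y0 \<subseteq> {..<m}"
    and had_char: "\<And>S. S \<subseteq> {..<m} \<Longrightarrow> \<epsilon> S = \<epsilon> {} * walsh_char S Y0"
    using multiplicative_sign_is_walsh_char[of m \<epsilon>] sign by blast
  have had_Y0: "hadamard m N S = H * \<epsilon> {} * walsh_char S Y0" if "S \<subseteq> {..<m}" for S
    unfolding had[OF that] had_char[OF that] by (rule mult.assoc[symmetric])
  have "N Y = (if Y = Y0 then H * \<epsilon> {} else 0)" if "Y \<subseteq> {..<m}" for Y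
  proof -
    have "2 ^ m * N Y = (\<Sum>S\<in>Pow {..<m}. walsh_char S Y * (H * \<epsilon> {} * walsh_char S Y0))"
      using hadamard_inversion[OF that, of N, symmetric] by (simp add: had_Y0)
    also have "\<dots> = H * \<epsilon> {} * (\<Sum>S\<in>Pow {..<m}. walsh_char S Y * walsh_char S Y0)"
      by (simp add: sum_distrib_left algebra_simps)
    also have "\<dots> = 2 ^ m * (if Y = Y0 then H * \<epsilon> {} else 0)"
      using that Y0 by (simp add: sum_walsh_char_orthogonal)
    finally show ?thesis by simp
  qed
  moreover have "\<bar>H * \<epsilon> {}\<bar> = H" using sign[of "{}"] \<open>H > 0\<close> by auto
  ultimately show ?thesis using Y0 unfolding signed_point_mass_def by blast
qed

lemma signed_point_mass_iff_hadamard: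
  assumes "H > 0"
  shows "signed_point_mass m H N \<longleftrightarrow>
    (\<forall>S\<subseteq>{..<m}. \<bar>hadamard m N S\<bar> = H) \<and>
    (\<forall>S1\<subseteq>{..<m}. \<forall>S2\<subseteq>{..<m}. \<forall>S3\<subseteq>{..<m}. \<bar>hadamard m N S1 + hadamard m N S2
        + hadamard m N S3 - hadamard m N (sym_diff (sym_diff S1 S2) S3)\<bar> = 2 * H)"
    (is "_ \<longleftrightarrow> ?abs \<and> ?triple")
proof
  assume "signed_point_mass m H N"
  from hadamard_of_signed_point_mass[OF this] show "?abs \<and> ?triple" by (rule conjI)
next
  assume flat: "?abs \<and> ?triple"
  show "signed_point_mass m H N"
  proof (rule signed_point_mass_of_hadamard[OF assms])
    show "\<bar>hadamard m N S\<bar> = H" if "S \<subseteq> {..<m}" for S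
      using flat[THEN conjunct1, rule_format, OF that] .
    show "\<bar>hadamard m N S + hadamard m N T + hadamard m N {} - hadamard m N (sym_diff S T)\<bar> = 2 * H"
      if "S \<subseteq> {..<m}" "T \<subseteq> {..<m}" for S T
      using flat[THEN conjunct2, rule_format, OF that empty_subsetI] by simp
  qed
qed

section \<open>Arithmetic in \<open>\<int>[\<zeta>]\<close>\<close>

text \<open>\<open>zeta m\<close> is the \<open>\<zeta>_(2^k)\<close> of the statement for \<open>k = m + 1\<close>.\<close>
definition zeta :: "nat \<Rightarrow> complex" where
  "zeta m = cis (pi / 2 ^ m)"

lemma zeta_power: "zeta m ^ j = cis (real j * pi / 2 ^ m)"
  by (simp add: zeta_def DeMoivre)

lemma zeta_power_two_pow: "zeta m ^ 2 ^ m = -1"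
  by (simp add: zeta_power)

lemma zeta_power_double_two_pow: "zeta m ^ (2 * 2 ^ m) = 1"
proof -
  have "zeta m ^ (2 * 2 ^ m) = (zeta m ^ 2 ^ m) ^ 2"
    by (simp add: power_mult[symmetric] mult.commute)
  then show ?thesis by (simp add: zeta_power_two_pow)
qed

lemma norm_zeta_power [simp]: "norm (zeta m ^ j) = 1"
  by (simp add: zeta_def norm_power)

lemma cnj_zeta: "cnj (zeta m) = zeta m ^ (2 * 2 ^ m - 1)"
proof -
  have "zeta m ^ (2 * 2 ^ m - 1) * zeta m = zeta m ^ (2 * 2 ^ m)"
    by (simp flip: power_Suc2)
  also have "\<dots> = cnj (zeta m) * zeta m"
    unfolding zeta_power_double_two_pow by (simp add: zeta_def cis_cnj cis_mult)
  finally show ?thesis by (simp add: zeta_def)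
qed

lemma zeta_ne_1: "zeta m \<noteq> 1"
  using zeta_power_two_pow[of m] by force

definition ipoly :: "int poly \<Rightarrow> 'a::comm_ring_1 \<Rightarrow> 'a" where
  "ipoly p x = poly (map_poly of_int p) x"

lemma map_poly_of_int_add:
  "map_poly (of_int :: int \<Rightarrow> 'a::comm_ring_1) (p + q) = map_poly of_int p + map_poly of_int q"
  by (rule poly_eqI) (simp add: coeff_map_poly)

lemma map_poly_of_int_mult:
  "map_poly (of_int :: int \<Rightarrow> 'a::comm_ring_1) (p * q) = map_poly of_int p * map_poly of_int q"
  by (induction p) (simp_all add: map_poly_pCons map_poly_of_int_add map_poly_smult)

lemma ipoly_0 [simp]: "ipoly 0 x = 0"
  and ipoly_1 [simp]: "ipoly 1 x = 1"
  by (simp_all add: ipoly_def)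

lemma ipoly_add [simp]: "ipoly (p + q) x = ipoly p x + ipoly q x"
  by (simp add: ipoly_def map_poly_of_int_add)

lemma ipoly_mult [simp]: "ipoly (p * q) x = ipoly p x * ipoly q x"
  by (simp add: ipoly_def map_poly_of_int_mult)

lemma ipoly_uminus [simp]: "ipoly (- p) x = - ipoly p x"
  using ipoly_add[of "- p" p x] by (simp add: eq_neg_iff_add_eq_0)

lemma ipoly_diff [simp]: "ipoly (p - q) x = ipoly p x - ipoly q x"
  using ipoly_add[of "p - q" q x] by simp

lemma ipoly_pCons [simp]: "ipoly (pCons a p) x = of_int a + x * ipoly p x"
  by (cases "a = 0 \<and> p = 0") (auto simp: ipoly_def map_poly_pCons)

lemma ipoly_const [simp]: "ipoly [:c:] x = of_int c"
  by simp

lemma ipoly_numeral [simp]: "ipoly (numeral w) x = numeral w"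
  by (metis ipoly_const of_int_numeral of_int_poly)

lemma ipoly_monom [simp]: "ipoly (monom c j) x = of_int c * x ^ j"
  by (simp add: ipoly_def map_poly_monom poly_monom)

lemma ipoly_power [simp]: "ipoly (p ^ j) x = ipoly p x ^ j"
  by (induction j) simp_all

lemma ipoly_smult [simp]: "ipoly (smult c p) x = of_int c * ipoly p x"
  by (simp add: ipoly_def map_poly_smult)

lemma ipoly_sum: "ipoly (sum f A) x = (\<Sum>i\<in>A. ipoly (f i) x)"
  by (induction A rule: infinite_finite_induct) simp_all

lemma ipoly_pcompose: "ipoly (pcompose p q) x = ipoly p (ipoly q x)"
  by (induction p) (simp_all add: pcompose_pCons)

lemma cnj_ipoly: "cnj (ipoly p z) = ipoly p (cnj z)"
  by (induction p) simp_all

lemma cnj_ipoly_zeta: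
  "cnj (ipoly p (zeta m)) = ipoly (pcompose p (monom 1 (2 * 2 ^ m - 1))) (zeta m)"
  by (simp add: cnj_ipoly ipoly_pcompose cnj_zeta)

lemma ipoly_as_sum_coeff:
  assumes "degree p < N"
  shows "ipoly p x = (\<Sum>j<N. of_int (coeff p j) * x ^ j)"
proof -
  have "p = (\<Sum>j\<le>N - 1. monom (coeff p j) j)"
    using assms by (intro poly_as_sum_of_monoms'[symmetric]) auto
  also have "{..N - 1} = {..<N}" using assms by auto
  finally have "ipoly p x = ipoly (\<Sum>j<N. monom (coeff p j) j) x" by simp
  then show ?thesis by (simp add: ipoly_sum)
qed

text \<open>The cyclotomic polynomial of the primitive \<open>2^(m+1)\<close>-th roots of unity, such as \<open>zeta m\<close>.\<close>
definition cyclotomic2 :: "nat \<Rightarrow> int poly" where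
  "cyclotomic2 m = 1 + monom 1 (2 ^ m)"

lemma ipoly_cyclotomic2: "ipoly (cyclotomic2 m) x = 1 + x ^ 2 ^ m"
  by (simp add: cyclotomic2_def)

lemma ipoly_cyclotomic2_zeta: "ipoly (cyclotomic2 m) (zeta m) = 0"
  by (simp add: ipoly_cyclotomic2 zeta_power_two_pow)

lemma degree_cyclotomic2: "degree (cyclotomic2 m) = 2 ^ m"
  unfolding cyclotomic2_def by (subst degree_add_eq_right) (auto simp: degree_monom_eq)

lemma lead_coeff_cyclotomic2: "lead_coeff (cyclotomic2 m) = 1"
  by (simp add: degree_cyclotomic2) (simp add: cyclotomic2_def coeff_monom)

lemma poly_cyclotomic2_1: "poly (cyclotomic2 m) 1 = 2"
  by (simp add: cyclotomic2_def poly_monom)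

lemma one_plus_cX_power_two_pow:
  fixes c :: int
  assumes "odd c"
  shows "\<exists>B. [:1, c:] ^ 2 ^ j = 1 + monom 1 (2 ^ j) + smult 2 B"
proof (induction j)
  case 0
  obtain d where d: "c = 2 * d + 1" using assms oddE by blast
  have "[:1, c:] = 1 + monom 1 (2 ^ 0) + smult 2 [:0, d:]"
    by (rule poly_eqI) (auto simp: d coeff_monom coeff_pCons split: nat.split)
  then show ?case by (intro exI[of _ "[:0, d:]"]) simp
next
  case (Suc j)
  then obtain B where B: "[:1, c:] ^ 2 ^ j = 1 + monom 1 (2 ^ j) + smult 2 B" by blast
  have "[:1, c:] ^ 2 ^ Suc j = ([:1, c:] ^ 2 ^ j) ^ 2"
    by (simp add: power_mult[symmetric] mult.commute)
  also have "\<dots> = (1 + monom 1 (2 ^ j) + 2 * B) ^ 2"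
    unfolding B by (simp add: numeral_mult_conv_smult)
  also have "\<dots> = 1 + monom 1 (2 ^ j) * monom 1 (2 ^ j)
      + 2 * (monom 1 (2 ^ j) + 2 * B + 2 * monom 1 (2 ^ j) * B + 2 * B * B)"
    by (simp add: power2_eq_square algebra_simps)
  also have "monom 1 (2 ^ j) * monom 1 (2 ^ j) = (monom 1 (2 ^ Suc j) :: int poly)"
    by (simp add: mult_monom mult_2)
  finally show ?case by (auto simp: numeral_mult_conv_smult)
qed

lemma odd_coeff_mult_lowest:
  fixes P Q :: "int poly"
  assumes "odd (coeff P a)" "\<And>i. i < a \<Longrightarrow> even (coeff P i)"
    and "odd (coeff Q b)" "\<And>i. i < b \<Longrightarrow> even (coeff Q i)"
  shows "odd (coeff (P * Q) (a + b))"
proof -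
  have "coeff (P * Q) (a + b)
      = coeff P a * coeff Q b + (\<Sum>i\<in>{..a + b} - {a}. coeff P i * coeff Q (a + b - i))"
    unfolding coeff_mult by (subst sum.remove[of _ a]) auto
  moreover have "even (coeff P i * coeff Q (a + b - i))" if "i \<in> {..a + b} - {a}" for i
    using that assms(2,4) by (cases "i < a") auto
  then have "even (\<Sum>i\<in>{..a + b} - {a}. coeff P i * coeff Q (a + b - i))"
    by (intro dvd_sum) auto
  ultimately show ?thesis using assms(1,3) by auto
qed

lemma eisenstein_factor_degree:
  fixes P Q C :: "int poly"
  assumes PQ: "P * Q = monom 1 N + smult 2 C" and const: "coeff (P * Q) 0 = 2"
    and deg: "degree (P * Q) = N"
  shows "degree P = 0 \<or> degree Q = 0"
proof (rule ccontr)
  assume nonconst: "\<not> (degree P = 0 \<or> degree Q = 0)"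
  have "P \<noteq> 0" "Q \<noteq> 0" using const by auto
  then have deg_sum: "degree P + degree Q = N" using deg by (simp add: degree_mult_eq)
  have coeff_PQ: "coeff (P * Q) i = (if i = N then 1 else 0) + 2 * coeff C i" for i
    by (simp add: PQ coeff_monom)
  have "odd (lead_coeff (P * Q))" using deg by (simp add: coeff_PQ)
  then have odd_lc: "odd (lead_coeff P)" "odd (lead_coeff Q)" by (auto simp: lead_coeff_mult)
  define a where "a = (LEAST i. odd (coeff P i))"
  define b where "b = (LEAST i. odd (coeff Q i))"
  have a: "odd (coeff P a)" "a \<le> degree P"
    unfolding a_def by (rule LeastI[of _ "degree P"], rule odd_lc, rule Least_le, rule odd_lc)
  have b: "odd (coeff Q b)" "b \<le> degree Q"
    unfolding b_def by (rule LeastI[of _ "degree Q"], rule odd_lc, rule Least_le, rule odd_lc)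
  have a_least: "i < a \<Longrightarrow> even (coeff P i)" for i unfolding a_def using not_less_Least by blast
  have b_least: "i < b \<Longrightarrow> even (coeff Q i)" for i unfolding b_def using not_less_Least by blast
  have "odd (coeff (P * Q) (a + b))"
    using a(1) a_least b(1) b_least by (rule odd_coeff_mult_lowest)
  then have "a + b = N" by (simp add: coeff_PQ split: if_splits)
  then have "even (coeff P 0)" "even (coeff Q 0)"
    using a(2) b(2) deg_sum nonconst a_least b_least by auto
  moreover have "coeff (P * Q) 0 = coeff P 0 * coeff Q 0" by (simp add: coeff_mult)
  ultimately have "4 dvd coeff (P * Q) 0" by (auto elim!: evenE)
  with const show False by simp
qed

lemma pcompose_power: "pcompose (p ^ j) q = pcompose p q ^ j"
  by (induction j) (simp_all add: pcompose_mult pcompose_1)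

lemma cyclotomic2_factor_degree:
  assumes "A * B = cyclotomic2 m"
  shows "degree A = 0 \<or> degree B = 0"
proof -
  obtain D where D: "[:1, 1::int:] ^ 2 ^ m = 1 + monom 1 (2 ^ m) + smult 2 D"
    using one_plus_cX_power_two_pow[of 1 m] by auto
  have shift: "pcompose A [:1, 1:] * pcompose B [:1, 1:] = pcompose (cyclotomic2 m) [:1, 1:]"
    by (simp add: assms flip: pcompose_mult)
  have "pcompose (cyclotomic2 m) [:1, 1:] = 1 + [:1, 1::int:] ^ 2 ^ m"
    by (simp add: cyclotomic2_def pcompose_add pcompose_1 monom_altdef pcompose_power pcompose_pCons)
  also have "\<dots> = monom 1 (2 ^ m) + smult 2 (1 + D)"
  proof -
    have two: "(2 :: int poly) = [:2:]" by (metis of_int_numeral of_int_poly)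
    show ?thesis unfolding D
      by (simp add: algebra_simps smult_add_right) (simp add: numeral_mult_conv_smult[symmetric] two)
  qed
  finally have shifted: "pcompose (cyclotomic2 m) [:1, 1:] = monom 1 (2 ^ m) + smult 2 (1 + D)" .
  have "degree (pcompose A [:1, 1:]) = 0 \<or> degree (pcompose B [:1, 1:]) = 0"
  proof (rule eisenstein_factor_degree)
    show "pcompose A [:1, 1:] * pcompose B [:1, 1:] = monom 1 (2 ^ m) + smult 2 (1 + D)"
      using shift shifted by simp
    show "coeff (pcompose A [:1, 1:] * pcompose B [:1, 1:]) 0 = 2"
      unfolding shift by (simp add: pcompose_coeff_0 poly_cyclotomic2_1)
    show "degree (pcompose A [:1, 1:] * pcompose B [:1, 1:]) = 2 ^ m"
      unfolding shift by (simp add: degree_pcompose degree_cyclotomic2)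
  qed
  then show ?thesis by (simp add: degree_pcompose)
qed

lemma monic_division:
  fixes g :: "'a::comm_ring_1 poly"
  assumes "lead_coeff g = 1"
  obtains q r where "p = g * q + r" "r = 0 \<or> degree r < degree g"
proof -
  have "g \<noteq> 0" using assms by auto
  obtain q r where "pseudo_divmod p g = (q, r)" by (cases "pseudo_divmod p g") auto
  note division = pseudo_divmod[OF \<open>g \<noteq> 0\<close> this]
  show ?thesis by (rule that[of q r]) (use division assms in simp_all)
qed

lemma primitive_dvd_of_dvd_smult:
  fixes R P q :: "int poly"
  assumes "content R = 1" "content P = 1" "c \<noteq> 0" "smult c P = R * q"
  shows "R dvd P"
proof -
  have content_q: "content q = \<bar>c\<bar>"
    using arg_cong[OF assms(4), of content] assms(1,2) by (simp add: content_mult)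
  have "smult \<bar>c\<bar> (smult (sgn c) P) = smult c P" by (simp add: abs_mult_sgn)
  also have "\<dots> = R * smult (content q) (primitive_part q)" using assms(4) by simp
  also have "\<dots> = smult \<bar>c\<bar> (R * primitive_part q)" by (simp add: content_q)
  finally have "smult (sgn c) P = R * primitive_part q"
    by (rule smult_cancel[rotated]) (simp add: assms(3))
  then have "R dvd smult (sgn c) P" by simp
  then have "R dvd smult (sgn c) (smult (sgn c) P)" by (rule dvd_smult)
  then show ?thesis using assms(3) by (simp add: sgn_mult_self_eq)
qed

lemma content_cyclotomic2: "content (cyclotomic2 m) = 1"
proof -
  have "content (cyclotomic2 m) dvd coeff (cyclotomic2 m) 0" by simp
  then have "content (cyclotomic2 m) dvd 1" by (simp add: cyclotomic2_def coeff_monom)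
  then show ?thesis using is_unit_content_iff by blast
qed

lemma degree_ge_of_ipoly_zeta_eq_0:
  assumes "p \<noteq> 0" "ipoly p (zeta m) = 0"
  shows "2 ^ m \<le> degree p"
proof -
  define P where "P d \<longleftrightarrow> (\<exists>q. q \<noteq> 0 \<and> ipoly q (zeta m) = 0 \<and> degree q = d)" for d
  define d where "d = (LEAST d. P d)"
  have "P d" unfolding d_def by (rule LeastI[of _ "degree p"]) (use assms P_def in blast)
  have minimal: "d \<le> degree q" if "q \<noteq> 0" "ipoly q (zeta m) = 0" for q
    unfolding d_def by (rule Least_le) (use that P_def in blast)
  obtain R where R: "R \<noteq> 0" "ipoly R (zeta m) = 0" "degree R = d"
    using \<open>P d\<close> P_def by blast
  define R' where "R' = primitive_part R"
  have R': "R' \<noteq> 0" "degree R' = d" "content R' = 1"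
    using R by (simp_all add: R'_def)
  have "of_int (content R) * ipoly R' (zeta m) = 0"
    using R(2) content_times_primitive_part[of R] by (metis R'_def ipoly_smult)
  then have R'_root: "ipoly R' (zeta m) = 0" using R(1) by simp
  obtain q r where "pseudo_divmod (cyclotomic2 m) R' = (q, r)"
    by (cases "pseudo_divmod (cyclotomic2 m) R'") auto
  note division = pseudo_divmod[OF R'(1) this]
  define c where "c = lead_coeff R' ^ (Suc (degree (cyclotomic2 m)) - degree R')"
  have qr: "smult c (cyclotomic2 m) = R' * q + r" and r: "r = 0 \<or> degree r < d"
    using division R'(2) by (simp_all add: c_def)
  have "ipoly r (zeta m) = 0"
    using arg_cong[OF qr, of "\<lambda>p. ipoly p (zeta m)"] R'_root by (simp add: ipoly_cyclotomic2_zeta)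
  then have "r = 0" using r minimal by (cases "r = 0") force+
  moreover have "c \<noteq> 0" using R'(1) by (simp add: c_def)
  ultimately have "R' dvd cyclotomic2 m"
    using qr R'(3) content_cyclotomic2 by (intro primitive_dvd_of_dvd_smult[of _ _ c q]) simp_all
  then obtain S where S: "cyclotomic2 m = R' * S" by (elim dvdE)
  then have "degree R' = 0 \<or> degree S = 0" by (intro cyclotomic2_factor_degree[of _ _ m]) simp
  moreover have "degree R' \<noteq> 0"
  proof
    assume "degree R' = 0"
    then obtain c where "R' = [:c:]" by (rule degree_eq_zeroE)
    then show False using R'(1) R'_root by simp
  qed
  moreover have "S \<noteq> 0" using S degree_cyclotomic2[of m] by auto
  ultimately have "d = 2 ^ m"
    using S R'(1,2) degree_mult_eq[of R' S] degree_cyclotomic2[of m] by simp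
  then show ?thesis using minimal assms by blast
qed

lemma ipoly_zeta_eq_0_iff: "ipoly p (zeta m) = 0 \<longleftrightarrow> cyclotomic2 m dvd p"
proof
  assume "cyclotomic2 m dvd p"
  then show "ipoly p (zeta m) = 0" by (auto simp: ipoly_cyclotomic2_zeta)
next
  assume p: "ipoly p (zeta m) = 0"
  obtain q r where qr: "p = cyclotomic2 m * q + r" and r: "r = 0 \<or> degree r < degree (cyclotomic2 m)"
    by (rule monic_division[OF lead_coeff_cyclotomic2])
  have "ipoly r (zeta m) = 0" using p qr by (simp add: ipoly_cyclotomic2_zeta)
  then have "r = 0" using r degree_ge_of_ipoly_zeta_eq_0[of r m] by (force simp: degree_cyclotomic2)
  with qr show "cyclotomic2 m dvd p" by simp
qed

lemma even_coeff_of_ipoly_zeta_eq_double: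
  assumes "ipoly p (zeta m) = 2 * ipoly q (zeta m)" "degree p < 2 ^ m"
  shows "even (coeff p j)"
proof -
  obtain q' r where qr: "q = cyclotomic2 m * q' + r" and r: "r = 0 \<or> degree r < degree (cyclotomic2 m)"
    by (rule monic_division[OF lead_coeff_cyclotomic2])
  have "ipoly (p - smult 2 r) (zeta m) = 0"
    using assms(1) qr by (simp add: ipoly_cyclotomic2_zeta)
  moreover have "degree (p - smult 2 r) < 2 ^ m"
    using r assms(2) by (auto simp: degree_cyclotomic2 intro!: degree_diff_less)
  ultimately have "p - smult 2 r = 0"
    using degree_ge_of_ipoly_zeta_eq_0[of "p - smult 2 r" m] by (auto simp: not_le)
  then have "p = smult 2 r" by simp
  then show ?thesis by simp
qed

lemma zeta_Suc_square: "zeta (Suc m) ^ 2 = zeta m"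
  by (subst zeta_power) (simp add: zeta_def)

lemma two_eq_one_minus_zeta_mult: "2 = (1 - zeta m) * ipoly (\<Sum>i<2 ^ m. monom 1 i) (zeta m)"
proof -
  have "(1 - zeta m) * ipoly (\<Sum>i<2 ^ m. monom 1 i) (zeta m) = (1 - zeta m) * (\<Sum>i<2 ^ m. zeta m ^ i)"
    by (simp add: ipoly_sum)
  also have "\<dots> = 1 - zeta m ^ 2 ^ m" by (simp add: one_diff_power_eq)
  finally show ?thesis by (simp add: zeta_power_two_pow)
qed

lemma one_minus_zeta_dvd_iff:
  "(\<exists>q. ipoly p (zeta m) = (1 - zeta m) * ipoly q (zeta m)) \<longleftrightarrow> even (poly p 1)"
proof
  assume "\<exists>q. ipoly p (zeta m) = (1 - zeta m) * ipoly q (zeta m)"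
  then obtain q where "ipoly p (zeta m) = (1 - zeta m) * ipoly q (zeta m)" by blast
  then have "ipoly (p - [:1, -1:] * q) (zeta m) = 0" by (simp add: algebra_simps)
  then have "cyclotomic2 m dvd p - [:1, -1:] * q" using ipoly_zeta_eq_0_iff by blast
  then obtain h where "p - [:1, -1:] * q = cyclotomic2 m * h" by (elim dvdE)
  then have "poly (p - [:1, -1:] * q) 1 = poly (cyclotomic2 m * h) 1" by simp
  then have "poly p 1 = 2 * poly h 1" by (simp add: poly_cyclotomic2_1)
  then show "even (poly p 1)" by simp
next
  assume "even (poly p 1)"
  then obtain c where c: "poly p 1 = 2 * c" by (elim evenE)
  have "poly (p - [:poly p 1:]) 1 = 0" by simp
  then have "[:-1, 1:] dvd p - [:poly p 1:]" using poly_eq_0_iff_dvd by blast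
  then obtain r where r: "p - [:poly p 1:] = [:-1, 1:] * r" by (elim dvdE)
  have "ipoly p (zeta m) = 2 * of_int c + (zeta m - 1) * ipoly r (zeta m)"
    using arg_cong[OF r, of "\<lambda>p. ipoly p (zeta m)"] by (simp add: c algebra_simps)
  also have "\<dots> = (1 - zeta m) * ipoly (smult c (\<Sum>i<2 ^ m. monom 1 i) - r) (zeta m)"
    by (subst two_eq_one_minus_zeta_mult[of m]) (simp add: algebra_simps)
  finally show "\<exists>q. ipoly p (zeta m) = (1 - zeta m) * ipoly q (zeta m)" by blast
qed

lemma one_minus_zeta_power_two_pow: "\<exists>B. (1 - zeta m) ^ 2 ^ m = 2 * ipoly B (zeta m)"
proof -
  obtain B where B: "[:1, -1::int:] ^ 2 ^ m = 1 + monom 1 (2 ^ m) + smult 2 B"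
    using one_plus_cX_power_two_pow[of "-1" m] by auto
  have "(1 - zeta m) ^ 2 ^ m = ipoly ([:1, -1::int:] ^ 2 ^ m) (zeta m)" by simp
  also have "\<dots> = 2 * ipoly B (zeta m)" unfolding B by (simp add: zeta_power_two_pow)
  finally show ?thesis by blast
qed

text \<open>Together with the previous lemma: \<open>2\<close> and \<open>(1 - zeta m) ^ 2 ^ m\<close> are associates.\<close>
lemma two_eq_one_minus_zeta_power_mult: "\<exists>C. 2 = (1 - zeta m) ^ 2 ^ m * ipoly C (zeta m)"
proof (induction m)
  case 0
  have "zeta 0 = -1" by (simp add: zeta_def)
  then show ?case by (intro exI[of _ 1]) simp
next
  case (Suc m)
  define z where "z = zeta (Suc m)"
  define S where "S = (\<Sum>i<2 ^ Suc m. monom 1 i :: int poly)"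
  obtain C where C: "2 = (1 - zeta m) ^ 2 ^ m * ipoly C (zeta m)" using Suc.IH by blast
  have zeta_m: "zeta m = z ^ 2" by (simp add: z_def zeta_Suc_square)
  \<comment> \<open>\<open>1 + z = 2 - (1 - z)\<close> is again divisible by \<open>1 - z\<close>\<close>
  have "2 = (1 - z) * ipoly S z"
    using two_eq_one_minus_zeta_mult[of "Suc m"] by (simp add: z_def S_def)
  then have "1 + z = (1 - z) * ipoly (S - 1) z" by (simp add: algebra_simps)
  have "1 - zeta m = (1 - z) * (1 + z)" by (simp add: zeta_m power2_eq_square algebra_simps)
  also have "\<dots> = (1 - z) ^ 2 * ipoly (S - 1) z"
    unfolding \<open>1 + z = _\<close> by (simp add: power2_eq_square mult.assoc)
  finally have "1 - zeta m = (1 - z) ^ 2 * ipoly (S - 1) z" .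
  then have "2 = ((1 - z) ^ 2) ^ 2 ^ m * ipoly ((S - 1) ^ 2 ^ m * pcompose C (monom 1 2)) z"
    using C by (simp add: ipoly_pcompose zeta_m power_mult_distrib mult.assoc)
  then have "2 = (1 - z) ^ 2 ^ Suc m * ipoly ((S - 1) ^ 2 ^ m * pcompose C (monom 1 2)) z"
    by (simp add: power_mult[symmetric])
  then show ?case unfolding z_def by blast
qed

lemma cnj_one_minus_zeta:
  "cnj (1 - zeta m) = (1 - zeta m) * ipoly (- monom 1 (2 * 2 ^ m - 1)) (zeta m)"
proof -
  have "zeta m ^ (2 * 2 ^ m - 1) * zeta m = 1"
    by (simp add: zeta_power_double_two_pow flip: power_Suc2)
  then show ?thesis by (simp add: cnj_zeta algebra_simps)
qed

lemma one_minus_zeta_power_odd_cofactor: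
  assumes "degree p < 2 ^ m" "odd (coeff p j)"
  obtains e q where "e < 2 ^ m" "ipoly p (zeta m) = (1 - zeta m) ^ e * ipoly q (zeta m)"
    "odd (poly q 1)"
proof -
  define D where "D = {e. e \<le> 2 ^ m \<and> (\<exists>q. ipoly p (zeta m) = (1 - zeta m) ^ e * ipoly q (zeta m))}"
  define e where "e = Max D"
  have "finite D" "0 \<in> D" unfolding D_def by auto
  then have "e \<in> D" unfolding e_def by (intro Max_in) auto
  have e_max: "e' \<le> e" if "e' \<in> D" for e' unfolding e_def using \<open>finite D\<close> that by simp
  obtain q where "e \<le> 2 ^ m" and q: "ipoly p (zeta m) = (1 - zeta m) ^ e * ipoly q (zeta m)"
    using \<open>e \<in> D\<close> unfolding D_def by blast
  have "e \<noteq> 2 ^ m"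
  proof
    assume "e = 2 ^ m"
    obtain B where "(1 - zeta m) ^ 2 ^ m = 2 * ipoly B (zeta m)"
      using one_minus_zeta_power_two_pow by blast
    then have "ipoly p (zeta m) = 2 * ipoly (B * q) (zeta m)" using q \<open>e = 2 ^ m\<close> by simp
    then show False using even_coeff_of_ipoly_zeta_eq_double assms by blast
  qed
  then have "e < 2 ^ m" using \<open>e \<le> 2 ^ m\<close> by simp
  moreover have "odd (poly q 1)"
  proof
    assume "even (poly q 1)"
    then obtain r where "ipoly q (zeta m) = (1 - zeta m) * ipoly r (zeta m)"
      using one_minus_zeta_dvd_iff by blast
    then have "Suc e \<in> D" using q \<open>e < 2 ^ m\<close> unfolding D_def by auto
    then show False using e_max by fastforce
  qed
  ultimately show ?thesis using q that by blast
qed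

text \<open>A \<open>(1 - zeta m)\<close>-adic valuation argument: if \<open>p\<close> had an odd coefficient, the valuation
  of \<open>\<bar>ipoly p (zeta m)\<bar>\<^sup>2\<close> would be even and below \<open>2 * 2 ^ m\<close>, while that of \<open>2 ^ n\<close> is
  \<open>n * 2 ^ m\<close>.\<close>
lemma even_coeff_of_norm_two_power:
  assumes deg: "degree p < 2 ^ m" and norm: "ipoly p (zeta m) * cnj (ipoly p (zeta m)) = 2 ^ n"
    and "n \<ge> 2"
  shows "even (coeff p j)"
proof (rule ccontr)
  assume "odd (coeff p j)"
  then obtain e q where e: "e < 2 ^ m" and pq: "ipoly p (zeta m) = (1 - zeta m) ^ e * ipoly q (zeta m)"
    and q_odd: "odd (poly q 1)"
    using one_minus_zeta_power_odd_cofactor[OF deg] by blast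
  define \<pi> where "\<pi> = 1 - zeta m"
  define W where "W = - (monom 1 (2 * 2 ^ m - 1) :: int poly)"
  define q' where "q' = pcompose q (monom 1 (2 * 2 ^ m - 1))"
  obtain C where C: "2 = \<pi> ^ 2 ^ m * ipoly C (zeta m)"
    using two_eq_one_minus_zeta_power_mult unfolding \<pi>_def by blast
  have cnj_p: "cnj (ipoly p (zeta m)) = (\<pi> * ipoly W (zeta m)) ^ e * ipoly q' (zeta m)"
    unfolding pq complex_cnj_mult complex_cnj_power cnj_one_minus_zeta cnj_ipoly_zeta
    by (simp add: \<pi>_def W_def q'_def)
  have "\<pi> ^ (2 * e) * ipoly (W ^ e * q * q') (zeta m)
      = (\<pi> ^ e * ipoly q (zeta m)) * ((\<pi> * ipoly W (zeta m)) ^ e * ipoly q' (zeta m))"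
    using power_add[of \<pi> e e] by (simp add: power_mult_distrib mult_ac flip: mult_2)
  also have "\<dots> = 2 ^ n" using norm pq cnj_p by (simp add: \<pi>_def)
  also have "\<dots> = 2 ^ 2 * 2 ^ (n - 2)"
    using \<open>n \<ge> 2\<close> by (metis le_add_diff_inverse power_add)
  also have "\<dots> = (\<pi> ^ 2 ^ m * ipoly C (zeta m)) ^ 2 * 2 ^ (n - 2)"
    by (subst (1) C) simp
  also have "\<dots> = \<pi> ^ (2 * e) * (\<pi> * ipoly ([:1, -1:] ^ (2 * 2 ^ m - 2 * e - 1) * C ^ 2 * 2 ^ (n - 2)) (zeta m))"
  proof -
    have "2 * 2 ^ m = 2 * e + Suc (2 * 2 ^ m - 2 * e - 1)" using e by simp
    then have "\<pi> ^ (2 * 2 ^ m) = \<pi> ^ (2 * e) * (\<pi> * \<pi> ^ (2 * 2 ^ m - 2 * e - 1))"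
      by (metis power_Suc power_add)
    then show ?thesis
      by (simp add: \<pi>_def power_mult_distrib power_mult[symmetric] mult.commute mult.left_commute)
  qed
  finally have "ipoly (W ^ e * q * q') (zeta m)
      = (1 - zeta m) * ipoly ([:1, -1:] ^ (2 * 2 ^ m - 2 * e - 1) * C ^ 2 * 2 ^ (n - 2)) (zeta m)"
    using zeta_ne_1[of m] by (simp add: \<pi>_def)
  then have "even (poly (W ^ e * q * q') 1)" using one_minus_zeta_dvd_iff by blast
  moreover have "poly W 1 = -1" "poly q' 1 = poly q 1"
    by (simp_all add: W_def q'_def poly_pcompose poly_monom)
  ultimately show False using q_odd by simp
qed

section \<open>Elements of \<open>\<int>[\<zeta>]\<close> of absolute value \<open>2^h\<close>\<close>

lemma zeta_power_double_ne_1: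
  assumes "0 < d" "d < 2 ^ m"
  shows "zeta m ^ (2 * d) \<noteq> 1"
proof
  assume "zeta m ^ (2 * d) = 1"
  then have "cis (real (2 * d) * pi / 2 ^ m) = 1" by (simp add: zeta_power)
  from arg_cong[OF this, of Re] have "cos (real (2 * d) * pi / 2 ^ m) = 1" by simp
  then obtain k :: int where "real (2 * d) * pi / 2 ^ m = of_int k * 2 * pi"
    using cos_one_2pi_int by blast
  then have "real d = of_int k * 2 ^ m" by (simp add: field_simps)
  then have "int d = k * 2 ^ m" by (metis of_int_eq_iff of_int_mult of_int_of_nat_eq of_int_numeral of_int_power)
  moreover have "int d > 0" "int d < 2 ^ m" using assms by auto
  ultimately show False
    by (metis mult_pos_pos mult_strict_right_mono not_less zero_less_power zero_less_numeral
        mult_1 zero_less_mult_iff linorder_neqE_linordered_idom int_one_le_iff_zero_less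
        mult_le_cancel_right1 less_le_trans)
qed

lemma sum_odd_zeta_powers:
  assumes "d < 2 ^ m"
  shows "(\<Sum>s<2 ^ m. (zeta m ^ (2 * s + 1)) ^ d) = (if d = 0 then 2 ^ m else 0)"
proof (cases "d = 0")
  case False
  define w where "w = zeta m ^ (2 * d)"
  have "w \<noteq> 1" unfolding w_def using zeta_power_double_ne_1 False assms by auto
  moreover have "w ^ 2 ^ m = 1" unfolding w_def
    by (metis power_mult mult.commute mult.left_commute zeta_power_double_two_pow power_one)
  ultimately have "(\<Sum>s<(2::nat) ^ m. w ^ s) = 0" by (simp add: geometric_sum)
  moreover have "(\<Sum>s<2 ^ m. (zeta m ^ (2 * s + 1)) ^ d) = (\<Sum>s<2 ^ m. zeta m ^ d * w ^ s)"
    by (intro sum.cong refl) (simp add: w_def power_mult[symmetric] power_add algebra_simps)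
  then have "(\<Sum>s<2 ^ m. (zeta m ^ (2 * s + 1)) ^ d) = zeta m ^ d * (\<Sum>s<2 ^ m. w ^ s)"
    by (simp add: sum_distrib_left)
  ultimately show ?thesis using False by simp
qed simp

lemma sum_odd_zeta_powers_mult_cnj:
  assumes "i < 2 ^ m" "j < 2 ^ m"
  shows "(\<Sum>s<2 ^ m. (zeta m ^ (2 * s + 1)) ^ i * cnj ((zeta m ^ (2 * s + 1)) ^ j))
       = (if i = j then 2 ^ m else 0)"
proof -
  have ge: "(\<Sum>s<2 ^ m. (zeta m ^ (2 * s + 1)) ^ i * cnj ((zeta m ^ (2 * s + 1)) ^ j))
       = (if i = j then 2 ^ m else 0)" if "j \<le> i" "i < 2 ^ m" for i j
  proof -
    have unit: "z ^ i * cnj (z ^ j) = z ^ (i - j)" if "norm z = 1" for z :: complex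
    proof -
      have "z ^ i * cnj (z ^ j) = z ^ (i - j) * (z * cnj z) ^ j"
        using \<open>j \<le> i\<close> by (simp add: power_mult_distrib power_add[symmetric])
      then show ?thesis using that by (simp add: complex_norm_square[symmetric])
    qed
    have "(\<Sum>s<2 ^ m. (zeta m ^ (2 * s + 1)) ^ i * cnj ((zeta m ^ (2 * s + 1)) ^ j))
        = (\<Sum>s<2 ^ m. (zeta m ^ (2 * s + 1)) ^ (i - j))"
      by (intro sum.cong refl unit norm_zeta_power)
    then show ?thesis using that sum_odd_zeta_powers[of "i - j" m] by simp
  qed
  show ?thesis
  proof (cases "j \<le> i")
    case False
    have eq: "(\<Sum>s<2 ^ m. (zeta m ^ (2 * s + 1)) ^ i * cnj ((zeta m ^ (2 * s + 1)) ^ j))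
        = cnj (\<Sum>s<2 ^ m. (zeta m ^ (2 * s + 1)) ^ j * cnj ((zeta m ^ (2 * s + 1)) ^ i))"
      by (simp add: mult.commute)
    have "(\<Sum>s<2 ^ m. (zeta m ^ (2 * s + 1)) ^ j * cnj ((zeta m ^ (2 * s + 1)) ^ i)) = 0"
      using ge[of i j] False assms by simp
    then show ?thesis using False unfolding eq by simp
  qed (use ge assms in blast)
qed

text \<open>\<open>p(X) p(X^(2^(m+1)-1)) - 2^n\<close> vanishes at \<open>zeta m\<close>, hence is divisible by
  \<open>cyclotomic2 m\<close> and vanishes at every odd power of \<open>zeta m\<close>.\<close>
lemma norm_ipoly_odd_zeta_power:
  assumes "ipoly p (zeta m) * cnj (ipoly p (zeta m)) = 2 ^ n"
  shows "ipoly p (zeta m ^ (2 * s + 1)) * cnj (ipoly p (zeta m ^ (2 * s + 1))) = 2 ^ n"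
proof -
  define z where "z = zeta m ^ (2 * s + 1)"
  define p' where "p' = pcompose p (monom 1 (2 * 2 ^ m - 1))"
  have "ipoly (p * p' - [:2 ^ n:]) (zeta m) = 0"
    using assms by (simp add: p'_def cnj_ipoly_zeta)
  then obtain h where h: "p * p' - [:2 ^ n:] = cyclotomic2 m * h"
    using ipoly_zeta_eq_0_iff by (metis dvdE)
  have "z ^ 2 ^ m = (zeta m ^ 2 ^ m) ^ (2 * s + 1)" unfolding z_def by (metis power_mult mult.commute)
  then have "ipoly (p * p' - [:2 ^ n:]) z = 0"
    by (simp only: h ipoly_mult ipoly_cyclotomic2) (simp add: zeta_power_two_pow)
  moreover have "cnj z = z ^ (2 * 2 ^ m - 1)"
    unfolding z_def complex_cnj_power cnj_zeta by (metis power_mult mult.commute)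
  then have "ipoly p' z = cnj (ipoly p z)" by (simp add: p'_def ipoly_pcompose cnj_ipoly)
  ultimately show ?thesis by (simp add: z_def)
qed

lemma sum_coeff_squares_of_norm:
  assumes deg: "degree p < 2 ^ m" and norm: "ipoly p (zeta m) * cnj (ipoly p (zeta m)) = 2 ^ n"
  shows "(\<Sum>j<2 ^ m. coeff p j ^ 2) = 2 ^ n"
proof -
  define c where "c j = complex_of_int (coeff p j)" for j
  define z where "z s = zeta m ^ (2 * s + 1)" for s
  have "(\<Sum>s<2 ^ m. ipoly p (z s) * cnj (ipoly p (z s))) = 2 ^ m * 2 ^ n"
    using norm_ipoly_odd_zeta_power[OF norm] by (simp add: z_def)
  moreover have "ipoly p (z s) * cnj (ipoly p (z s))
      = (\<Sum>i<2 ^ m. \<Sum>j<2 ^ m. c i * c j * (z s ^ i * cnj (z s ^ j)))" for s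
    unfolding ipoly_as_sum_coeff[OF deg] cnj_sum sum_product
    by (intro sum.cong refl) (simp add: c_def)
  then have "(\<Sum>s<2 ^ m. ipoly p (z s) * cnj (ipoly p (z s)))
      = (\<Sum>s<2 ^ m. \<Sum>i<2 ^ m. \<Sum>j<2 ^ m. c i * c j * (z s ^ i * cnj (z s ^ j)))"
    by simp
  also have "\<dots> = (\<Sum>i<2 ^ m. \<Sum>j<2 ^ m. \<Sum>s<2 ^ m. c i * c j * (z s ^ i * cnj (z s ^ j)))"
    by (subst sum.swap) (rule sum.cong[OF refl], rule sum.swap)
  also have "\<dots> = (\<Sum>i<2 ^ m. \<Sum>j<2 ^ m. c i * c j * (\<Sum>s<2 ^ m. z s ^ i * cnj (z s ^ j)))"
    by (simp add: sum_distrib_left)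
  also have "\<dots> = (\<Sum>i<2 ^ m. \<Sum>j<2 ^ m. c i * c j * (if i = j then 2 ^ m else 0))"
    unfolding z_def by (intro sum.cong refl, subst sum_odd_zeta_powers_mult_cnj) auto
  also have "\<dots> = 2 ^ m * (\<Sum>i<2 ^ m. c i * c i)"
    by (simp add: if_distrib sum.delta sum_distrib_left mult.commute cong: if_cong)
  finally have "(\<Sum>i<2 ^ m. c i * c i) = 2 ^ n" by simp
  then have "complex_of_int (\<Sum>i<2 ^ m. coeff p i ^ 2) = complex_of_int (2 ^ n)"
    by (simp add: c_def power2_eq_square)
  then show ?thesis by (simp only: of_int_eq_iff)
qed

lemma sum_squares_eq_1:
  fixes c :: "nat \<Rightarrow> int"
  assumes "(\<Sum>j<N. c j ^ 2) = 1"
  obtains j0 where "j0 < N" "\<bar>c j0\<bar> = 1" "\<forall>j<N. j \<noteq> j0 \<longrightarrow> c j = 0"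
proof -
  obtain j0 where j0: "j0 < N" "c j0 \<noteq> 0"
    using assms by (metis (no_types, lifting) power_zero_numeral sum.neutral zero_neq_one lessThan_iff)
  have split: "(\<Sum>j<N. c j ^ 2) = c j0 ^ 2 + (\<Sum>j\<in>{..<N} - {j0}. c j ^ 2)"
    using j0(1) by (subst sum.remove[of _ j0]) auto
  have "c j0 ^ 2 \<ge> 1" using j0(2) by (metis int_one_le_iff_zero_less zero_less_power2)
  moreover have "(\<Sum>j\<in>{..<N} - {j0}. c j ^ 2) \<ge> 0" by (intro sum_nonneg) simp
  ultimately have "c j0 ^ 2 = 1" "(\<Sum>j\<in>{..<N} - {j0}. c j ^ 2) = 0"
    using split assms by linarith+
  then have "\<bar>c j0\<bar> = 1" "\<forall>j\<in>{..<N} - {j0}. c j ^ 2 = 0"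
    by (auto simp: power2_eq_1_iff sum_nonneg_eq_0_iff)
  then show ?thesis by (intro that[OF j0(1)]) auto
qed

lemma coeffs_of_norm_one:
  assumes "degree p < 2 ^ m" "ipoly p (zeta m) * cnj (ipoly p (zeta m)) = 1"
  shows "\<exists>j0<2 ^ m. \<exists>e. \<bar>e\<bar> = 1 \<and> (\<forall>j. coeff p j = (if j = j0 then e else 0))"
proof -
  have "(\<Sum>j<2 ^ m. coeff p j ^ 2) = 1"
    using sum_coeff_squares_of_norm[of p m 0] assms by simp
  then obtain j0 where j0: "j0 < 2 ^ m" "\<bar>coeff p j0\<bar> = 1"
    and others: "\<forall>j<2 ^ m. j \<noteq> j0 \<longrightarrow> coeff p j = 0"
    by (rule sum_squares_eq_1)
  have "coeff p j = (if j = j0 then coeff p j0 else 0)" for j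
  proof (cases "j = j0")
    case False
    show ?thesis
    proof (cases "j < 2 ^ m")
      case True
      then show ?thesis using others False by simp
    next
      case outside: False
      then have "degree p < j" using assms(1) by simp
      then show ?thesis using False by (simp add: coeff_eq_0)
    qed
  qed simp
  then show ?thesis using j0 by blast
qed

lemma coeffs_of_norm_two_power:
  assumes "degree p < 2 ^ m" "ipoly p (zeta m) * cnj (ipoly p (zeta m)) = 2 ^ (2 * h)"
  shows "\<exists>j0<2 ^ m. \<exists>e. \<bar>e\<bar> = 2 ^ h \<and> (\<forall>j. coeff p j = (if j = j0 then e else 0))"
  using assms
proof (induction h arbitrary: p)
  case 0
  then show ?case using coeffs_of_norm_one by simp
next
  case (Suc h)
  have "even (coeff p j)" for j
    by (rule even_coeff_of_norm_two_power[OF Suc.prems]) simp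
  define q where "q = map_poly (\<lambda>a. a div 2) p"
  have p: "p = smult 2 q"
    by (rule poly_eqI) (simp add: q_def coeff_map_poly \<open>\<And>j. even (coeff p j)\<close>)
  have "degree q < 2 ^ m" using Suc.prems(1) p by (cases "q = 0") auto
  moreover have "ipoly q (zeta m) * cnj (ipoly q (zeta m)) = 2 ^ (2 * h)"
  proof -
    have "4 * (ipoly q (zeta m) * cnj (ipoly q (zeta m))) = ipoly p (zeta m) * cnj (ipoly p (zeta m))"
      by (simp add: p)
    also have "\<dots> = 4 * 2 ^ (2 * h)"
      using Suc.prems(2) by (simp add: power_add)
    finally show ?thesis by simp
  qed
  ultimately obtain j0 e where "j0 < 2 ^ m" "\<bar>e\<bar> = 2 ^ h"
    and "\<forall>j. coeff q j = (if j = j0 then e else 0)"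
    using Suc.IH by blast
  then have "\<bar>2 * e\<bar> = 2 ^ Suc h" "\<forall>j. coeff p j = (if j = j0 then 2 * e else 0)"
    by (simp_all add: abs_mult p)
  then show ?case using \<open>j0 < 2 ^ m\<close> by blast
qed

definition binary_value :: "nat set \<Rightarrow> nat" where
  "binary_value Y = (\<Sum>i\<in>Y. 2 ^ i)"

lemma binary_value_split:
  assumes "Y \<subseteq> {..<Suc m}"
  shows "binary_value Y = binary_value (Y \<inter> {..<m}) + (if m \<in> Y then 2 ^ m else 0)"
proof -
  have fin: "finite Y" using assms finite_subset by blast
  have Y: "Y = (Y \<inter> {..<m}) \<union> (Y \<inter> {m})" using assms by auto
  have "binary_value Y = binary_value (Y \<inter> {..<m}) + (\<Sum>i\<in>Y \<inter> {m}. 2 ^ i)"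
    unfolding binary_value_def by (subst Y, rule sum.union_disjoint) (use fin in auto)
  then show ?thesis by (cases "m \<in> Y") auto
qed

lemma binary_value_less: "Y \<subseteq> {..<m} \<Longrightarrow> binary_value Y < 2 ^ m"
proof (induction m arbitrary: Y)
  case 0
  then show ?case by (simp add: binary_value_def)
next
  case (Suc m)
  have "binary_value (Y \<inter> {..<m}) < 2 ^ m" by (rule Suc.IH) auto
  then show ?case using binary_value_split[OF Suc.prems] by auto
qed

lemma inj_on_binary_value: "inj_on binary_value (Pow {..<m})"
proof (induction m)
  case 0
  then show ?case by simp
next
  case (Suc m)
  show ?case
  proof (rule inj_onI)
    fix Y Z assume Y: "Y \<in> Pow {..<Suc m}" and Z: "Z \<in> Pow {..<Suc m}"
      and eq: "binary_value Y = binary_value Z"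
    have less: "binary_value (Y \<inter> {..<m}) < 2 ^ m" "binary_value (Z \<inter> {..<m}) < 2 ^ m"
      by (auto intro: binary_value_less)
    have "binary_value (Y \<inter> {..<m}) + (if m \<in> Y then 2 ^ m else 0)
        = binary_value (Z \<inter> {..<m}) + (if m \<in> Z then 2 ^ m else 0)"
      using eq Y Z binary_value_split by auto
    then have top: "m \<in> Y \<longleftrightarrow> m \<in> Z"
      and "binary_value (Y \<inter> {..<m}) = binary_value (Z \<inter> {..<m})"
      using less by (auto split: if_splits)
    then have "Y \<inter> {..<m} = Z \<inter> {..<m}"
      using Suc.IH by (auto dest: inj_onD)
    then show "Y = Z"
    proof (intro set_eqI)
      fix x
      show "x \<in> Y \<longleftrightarrow> x \<in> Z"
        using top \<open>Y \<inter> {..<m} = Z \<inter> {..<m}\<close> Y Z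
        by (cases "x < m") (auto simp: less_Suc_eq)
    qed
  qed
qed

lemma coeff_sum_monom_binary_value:
  fixes N :: "nat set \<Rightarrow> int" and m :: nat
  defines "p \<equiv> \<Sum>Y\<in>Pow {..<m}. monom (N Y) (binary_value Y)"
  shows "Y \<subseteq> {..<m} \<Longrightarrow> coeff p (binary_value Y) = N Y"
    and "j \<notin> binary_value ` Pow {..<m} \<Longrightarrow> coeff p j = 0"
    and "degree p < 2 ^ m"
proof -
  have coeff_p: "coeff p j = (\<Sum>Y\<in>Pow {..<m}. if binary_value Y = j then N Y else 0)" for j
    unfolding p_def by (simp add: coeff_sum coeff_monom)
  show "coeff p (binary_value Y) = N Y" if "Y \<subseteq> {..<m}"
  proof -
    have "coeff p (binary_value Y) = (\<Sum>Z\<in>Pow {..<m}. if Z = Y then N Z else 0)"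
      unfolding coeff_p using that inj_on_binary_value[of m]
      by (intro sum.cong refl) (auto dest: inj_onD)
    then show ?thesis using that by simp
  qed
  show zero: "coeff p j = 0" if "j \<notin> binary_value ` Pow {..<m}" for j
    unfolding coeff_p using that by (intro sum.neutral) auto
  have "degree p \<le> 2 ^ m - 1"
  proof (rule degree_le, intro allI impI zero)
    fix j :: nat
    assume "2 ^ m - 1 < j"
    then have "binary_value Y \<noteq> j" if "Y \<subseteq> {..<m}" for Y
      using binary_value_less[OF that] by linarith
    then show "j \<notin> binary_value ` Pow {..<m}" by auto
  qed
  moreover have "(0::nat) < 2 ^ m" by simp
  ultimately show "degree p < 2 ^ m" by linarith
qed

lemma cmod_sum_zeta_binary_value_iff:
  "cmod (\<Sum>Y\<in>Pow {..<m}. zeta m ^ binary_value Y * of_int (N Y)) = 2 ^ h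
     \<longleftrightarrow> signed_point_mass m (2 ^ h) N"
proof
  define p where "p = (\<Sum>Y\<in>Pow {..<m}. monom (N Y) (binary_value Y))"
  note coeff_p = coeff_sum_monom_binary_value[where m = m and N = N, folded p_def]
  have "ipoly p (zeta m) = (\<Sum>Y\<in>Pow {..<m}. zeta m ^ binary_value Y * of_int (N Y))"
    by (simp add: p_def ipoly_sum mult.commute)
  moreover assume "cmod (\<Sum>Y\<in>Pow {..<m}. zeta m ^ binary_value Y * of_int (N Y)) = 2 ^ h"
  ultimately have "cmod (ipoly p (zeta m)) = 2 ^ h" by simp
  then have "ipoly p (zeta m) * cnj (ipoly p (zeta m)) = 2 ^ (2 * h)"
    unfolding complex_norm_square[symmetric] by (simp add: power_even_eq)
  then obtain j0 e where e: "\<bar>e\<bar> = 2 ^ h" and j0: "\<forall>j. coeff p j = (if j = j0 then e else 0)"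
    using coeffs_of_norm_two_power[OF coeff_p(3)] by blast
  then have "coeff p j0 \<noteq> 0" by (metis abs_0 power_not_zero zero_neq_numeral)
  then have "j0 \<in> binary_value ` Pow {..<m}" using coeff_p(2) by blast
  then obtain Y0 where Y0: "Y0 \<in> Pow {..<m}" "j0 = binary_value Y0" by blast
  have "N Y = (if Y = Y0 then e else 0)" if "Y \<subseteq> {..<m}" for Y
  proof -
    have "binary_value Y = binary_value Y0 \<longleftrightarrow> Y = Y0"
      using Y0(1) that by (intro inj_on_eq_iff[OF inj_on_binary_value]) auto
    then show ?thesis using coeff_p(1)[OF that] j0 Y0(2) by simp
  qed
  then show "signed_point_mass m (2 ^ h) N" using Y0(1) e unfolding signed_point_mass_def by blast
next
  assume "signed_point_mass m (2 ^ h) N"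
  then obtain Y0 e where Y0: "Y0 \<subseteq> {..<m}" and e: "\<bar>e\<bar> = 2 ^ h"
    and N: "\<And>Y. Y \<subseteq> {..<m} \<Longrightarrow> N Y = (if Y = Y0 then e else 0)"
    unfolding signed_point_mass_def by blast
  have "(\<Sum>Y\<in>Pow {..<m}. zeta m ^ binary_value Y * of_int (N Y))
      = (\<Sum>Y\<in>Pow {..<m}. if Y = Y0 then zeta m ^ binary_value Y0 * of_int e else 0)"
    using N by (intro sum.cong) auto
  also have "\<dots> = zeta m ^ binary_value Y0 * of_int e" using Y0 by simp
  finally show "cmod (\<Sum>Y\<in>Pow {..<m}. zeta m ^ binary_value Y * of_int (N Y)) = 2 ^ h"
    using e by (simp add: norm_mult flip: of_int_abs)
qed

section \<open>Walsh spectra of the coset\<close>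

lemma finite_Vn: "finite (Vn n)"
proof -
  have "Vn n \<subseteq> (\<lambda>S i. i \<in> S) ` Pow {..<n}"
  proof
    fix x assume x: "x \<in> Vn n"
    have "x = (\<lambda>i. i \<in> {i. i < n \<and> x i})"
      using x by (auto simp: Vn_def fun_eq_iff) (meson not_less)
    then show "x \<in> (\<lambda>S i. i \<in> S) ` Pow {..<n}" by blast
  qed
  then show ?thesis by (rule finite_subset) simp
qed

definition walsh :: "nat \<Rightarrow> ((nat \<Rightarrow> bool) \<Rightarrow> bool) \<Rightarrow> (nat \<Rightarrow> bool) \<Rightarrow> int" where
  "walsh n g u = (\<Sum>x\<in>Vn n. (-1) ^ of_bool (g x \<noteq> ip n u x))"

lemma bent_iff_walsh:
  assumes "even n"
  shows "bent n g \<longleftrightarrow> (\<forall>u\<in>Vn n. \<bar>walsh n g u\<bar> = 2 ^ (n div 2))"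
proof -
  have "2 powr (real n / 2) = real_of_int (2 ^ (n div 2))"
    using assms by (auto simp: powr_realpow elim!: evenE)
  moreover have "(\<Sum>x\<in>Vn n. (-1::real) ^ of_bool (g x \<noteq> ip n u x)) = real_of_int (walsh n g u)" for u
    by (simp add: walsh_def)
  ultimately show ?thesis unfolding bent_def by (simp del: of_int_power flip: of_int_abs)
qed

lemma walsh_cong: "(\<And>x. x \<in> Vn n \<Longrightarrow> g x = g' x) \<Longrightarrow> walsh n g u = walsh n g' u"
  unfolding walsh_def by (intro sum.cong) auto

lemma walsh_restrV [simp]: "walsh n (restrV n g) u = walsh n g u"
  by (rule walsh_cong) (simp add: restrV_def)

definition majority :: "('a \<Rightarrow> bool) \<Rightarrow> ('a \<Rightarrow> bool) \<Rightarrow> ('a \<Rightarrow> bool) \<Rightarrow> 'a \<Rightarrow> bool" where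
  "majority f g h = (\<lambda>x. (f x \<and> g x) \<noteq> ((f x \<and> h x) \<noteq> (g x \<and> h x)))"

lemma majority_degenerate:
  "majority g g h = g" "majority g h g = g" "majority h g g = g"
  by (auto simp: majority_def)

lemma walsh_majority:
  "2 * walsh n (majority f g h) u
     = walsh n f u + walsh n g u + walsh n h u - walsh n (\<lambda>x. f x \<noteq> (g x \<noteq> h x)) u"
proof -
  have "2 * (-1::int) ^ of_bool (majority f g h x \<noteq> l)
      = (-1) ^ of_bool (f x \<noteq> l) + (-1) ^ of_bool (g x \<noteq> l) + (-1) ^ of_bool (h x \<noteq> l)
        - (-1) ^ of_bool ((f x \<noteq> (g x \<noteq> h x)) \<noteq> l)" for x l
    by (cases "f x"; cases "g x"; cases "h x"; cases l) (simp_all add: majority_def)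
  then show ?thesis
    unfolding walsh_def sum_distrib_left by (simp add: sum.distrib sum_subtractf)
qed

lemma bent_majority_distinct_iff:
  assumes "\<forall>g\<in>A. bent n g"
  shows "(\<forall>f\<in>A. \<forall>g\<in>A. \<forall>h\<in>A. f \<noteq> g \<and> f \<noteq> h \<and> g \<noteq> h \<longrightarrow> bent n (majority f g h))
     \<longleftrightarrow> (\<forall>f\<in>A. \<forall>g\<in>A. \<forall>h\<in>A. bent n (majority f g h))"
  using assms by (metis majority_degenerate)

definition coset_fun :: "(nat \<Rightarrow> 'a \<Rightarrow> bool) \<Rightarrow> nat \<Rightarrow> nat set \<Rightarrow> 'a \<Rightarrow> bool" where
  "coset_fun a m S x \<longleftrightarrow> a m x \<noteq> odd (card {j \<in> S. a j x})"

lemma xor_coset_span2_eq: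
  "xor_coset n (a m) (span2 n a {..<m}) = {restrV n (coset_fun a m S) | S. S \<subseteq> {..<m}}"
proof -
  have e: "restrV n (\<lambda>x. a m x \<noteq> restrV n (\<lambda>x. odd (card {j \<in> S. a j x})) x)
      = restrV n (coset_fun a m S)" for S
    by (rule ext) (simp add: restrV_def coset_fun_def)
  then show ?thesis unfolding xor_coset_def span2_def
  proof (intro set_eqI iffI)
    fix g assume "g \<in> {restrV n (\<lambda>x. a m x \<noteq> h x) |h.
      h \<in> {restrV n (\<lambda>x. odd (card {j \<in> S. a j x})) |S. S \<subseteq> {..<m}}}"
    then obtain S where "S \<subseteq> {..<m}"
      "g = restrV n (\<lambda>x. a m x \<noteq> restrV n (\<lambda>x. odd (card {j \<in> S. a j x})) x)"
      by blast
    then show "g \<in> {restrV n (coset_fun a m S) |S. S \<subseteq> {..<m}}" using e by blast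
  next
    fix g assume "g \<in> {restrV n (coset_fun a m S) |S. S \<subseteq> {..<m}}"
    then obtain S where "S \<subseteq> {..<m}" "g = restrV n (coset_fun a m S)" by blast
    then show "g \<in> {restrV n (\<lambda>x. a m x \<noteq> h x) |h.
      h \<in> {restrV n (\<lambda>x. odd (card {j \<in> S. a j x})) |S. S \<subseteq> {..<m}}}"
      using e[of S, symmetric] by blast
  qed
qed

lemma coset_fun_sym_diff:
  assumes "finite S1" "finite S2" "finite S3"
  shows "coset_fun a m (sym_diff (sym_diff S1 S2) S3) x
    \<longleftrightarrow> coset_fun a m S1 x \<noteq> (coset_fun a m S2 x \<noteq> coset_fun a m S3 x)"
proof -
  have fin: "finite {j \<in> S1. a j x}" "finite {j \<in> S2. a j x}" "finite {j \<in> S3. a j x}"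
    "finite (sym_diff {j \<in> S1. a j x} {j \<in> S2. a j x})" using assms by auto
  have filter: "{j \<in> sym_diff (sym_diff S1 S2) S3. a j x}
      = sym_diff (sym_diff {j \<in> S1. a j x} {j \<in> S2. a j x}) {j \<in> S3. a j x}" by blast
  show ?thesis
    unfolding coset_fun_def filter odd_card_sym_diff[OF fin(4) fin(3)] odd_card_sym_diff[OF fin(1) fin(2)]
    by auto
qed

definition low_bits :: "(nat \<Rightarrow> 'a \<Rightarrow> bool) \<Rightarrow> nat \<Rightarrow> 'a \<Rightarrow> nat set" where
  "low_bits a m x = {j \<in> {..<m}. a j x}"

definition fibre_walsh :: "(nat \<Rightarrow> (nat \<Rightarrow> bool) \<Rightarrow> bool) \<Rightarrow> nat \<Rightarrow> nat \<Rightarrow> (nat \<Rightarrow> bool) \<Rightarrow> nat set \<Rightarrow> int" where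
  "fibre_walsh a m n u Y = (\<Sum>x\<in>{x \<in> Vn n. low_bits a m x = Y}. (-1) ^ of_bool (a m x \<noteq> ip n u x))"

lemma sum_Vn_by_low_bits:
  fixes F :: "nat set \<Rightarrow> 'c::comm_ring_1"
  shows "(\<Sum>x\<in>Vn n. F (low_bits a m x) * G x)
     = (\<Sum>Y\<in>Pow {..<m}. F Y * (\<Sum>x\<in>{x \<in> Vn n. low_bits a m x = Y}. G x))"
proof -
  have "(\<Sum>x\<in>Vn n. F (low_bits a m x) * G x)
      = (\<Sum>Y\<in>Pow {..<m}. \<Sum>x\<in>{x \<in> Vn n. low_bits a m x = Y}. F (low_bits a m x) * G x)"
    by (rule sum.group[symmetric]) (auto simp: finite_Vn low_bits_def)
  also have "\<dots> = (\<Sum>Y\<in>Pow {..<m}. \<Sum>x\<in>{x \<in> Vn n. low_bits a m x = Y}. F Y * G x)"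
    by (intro sum.cong refl) auto
  also have "\<dots> = (\<Sum>Y\<in>Pow {..<m}. F Y * (\<Sum>x\<in>{x \<in> Vn n. low_bits a m x = Y}. G x))"
    by (simp only: sum_distrib_left)
  finally show ?thesis .
qed

lemma walsh_coset_fun:
  assumes "S \<subseteq> {..<m}"
  shows "walsh n (coset_fun a m S) u = hadamard m (fibre_walsh a m n u) S"
proof -
  have sign: "(-1::int) ^ of_bool (coset_fun a m S x \<noteq> ip n u x)
      = walsh_char S (low_bits a m x) * (-1) ^ of_bool (a m x \<noteq> ip n u x)" for x
  proof -
    have "{j \<in> S. a j x} = S \<inter> low_bits a m x" using assms by (auto simp: low_bits_def)
    then show ?thesis by (auto simp: coset_fun_def walsh_char_def minus_one_power_iff)
  qed
  show ?thesis
    unfolding walsh_def hadamard_def fibre_walsh_def sign by (rule sum_Vn_by_low_bits)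
qed

lemma cis_binary_expansion:
  "cis (2 * pi * real (\<Sum>j<Suc m. 2 ^ j * of_bool (a j x)) / 2 ^ Suc m)
     = zeta m ^ binary_value (low_bits a m x) * (-1) ^ of_bool (a m x)"
proof -
  have "binary_value (low_bits a m x) = (\<Sum>j<m. if a j x then 2 ^ j else 0)"
    unfolding binary_value_def low_bits_def by (rule sum.inter_filter) simp
  also have "\<dots> = (\<Sum>j<m. 2 ^ j * of_bool (a j x))" by (intro sum.cong refl) auto
  finally have sum_eq: "(\<Sum>j<Suc m. 2 ^ j * of_bool (a j x))
      = binary_value (low_bits a m x) + 2 ^ m * of_bool (a m x)"
    by simp
  have cis_zeta: "cis (2 * pi * real N / 2 ^ Suc m) = zeta m ^ N" for N
  proof -
    have "2 * pi * real N / 2 ^ Suc m = real N * pi / 2 ^ m" by (simp add: field_simps)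
    then show ?thesis by (simp only: zeta_power)
  qed
  have "cis (2 * pi * real (\<Sum>j<Suc m. 2 ^ j * of_bool (a j x)) / 2 ^ Suc m)
      = zeta m ^ (binary_value (low_bits a m x) + 2 ^ m * of_bool (a m x))"
    unfolding sum_eq by (rule cis_zeta)
  also have "\<dots> = zeta m ^ binary_value (low_bits a m x) * (-1) ^ of_bool (a m x)"
    by (simp add: power_add power_mult zeta_power_two_pow)
  finally show ?thesis .
qed

lemma gbent_sum_eq:
  "(\<Sum>x\<in>Vn n. cis (2 * pi * real (\<Sum>j<Suc m. 2 ^ j * of_bool (a j x)) / 2 ^ Suc m)
       * (-1) ^ of_bool (ip n u x))
     = (\<Sum>Y\<in>Pow {..<m}. zeta m ^ binary_value Y * of_int (fibre_walsh a m n u Y))"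
proof -
  have "(-1::complex) ^ of_bool (a m x) * (-1) ^ of_bool (ip n u x)
      = of_int ((-1) ^ of_bool (a m x \<noteq> ip n u x))" for x
    by (cases "a m x"; cases "ip n u x") simp_all
  then show ?thesis
    unfolding cis_binary_expansion fibre_walsh_def
    by (simp add: mult.assoc sum_Vn_by_low_bits[where F = "\<lambda>Y. zeta m ^ binary_value Y"])
qed

lemma gbent_iff_signed_point_mass:
  assumes "even n"
  shows "gbent n (Suc m) (\<lambda>x. \<Sum>j<Suc m. 2 ^ j * of_bool (a j x))
    \<longleftrightarrow> (\<forall>u\<in>Vn n. signed_point_mass m (2 ^ (n div 2)) (fibre_walsh a m n u))"
proof -
  have "2 powr (real n / 2) = 2 ^ (n div 2)"
    using assms by (auto simp: powr_realpow elim!: evenE)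
  then show ?thesis
    unfolding gbent_def gbent_sum_eq by (simp add: cmod_sum_zeta_binary_value_iff)
qed

lemma bent_coset_fun_iff:
  assumes "even n" "S \<subseteq> {..<m}"
  shows "bent n (restrV n (coset_fun a m S))
    \<longleftrightarrow> (\<forall>u\<in>Vn n. \<bar>hadamard m (fibre_walsh a m n u) S\<bar> = 2 ^ (n div 2))"
  using assms by (simp add: bent_iff_walsh walsh_coset_fun)

lemma bent_majority_coset_fun_iff:
  fixes a :: "nat \<Rightarrow> (nat \<Rightarrow> bool) \<Rightarrow> bool" and m :: nat
  assumes "even n" and S: "S1 \<subseteq> {..<m}" "S2 \<subseteq> {..<m}" "S3 \<subseteq> {..<m}"
  defines "g S \<equiv> restrV n (coset_fun a m S)" and "W u \<equiv> hadamard m (fibre_walsh a m n u)"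
  shows "bent n (majority (g S1) (g S2) (g S3))
    \<longleftrightarrow> (\<forall>u\<in>Vn n. \<bar>W u S1 + W u S2 + W u S3 - W u (sym_diff (sym_diff S1 S2) S3)\<bar> = 2 * 2 ^ (n div 2))"
proof -
  have "finite S1" "finite S2" "finite S3" using S by (auto intro: finite_subset)
  then have "walsh n (\<lambda>x. g S1 x \<noteq> (g S2 x \<noteq> g S3 x)) u
      = walsh n (coset_fun a m (sym_diff (sym_diff S1 S2) S3)) u" for u
    by (intro walsh_cong) (simp add: g_def restrV_def coset_fun_sym_diff)
  moreover have "sym_diff (sym_diff S1 S2) S3 \<subseteq> {..<m}" using S by blast
  ultimately have "W u S1 + W u S2 + W u S3 - W u (sym_diff (sym_diff S1 S2) S3)
      = 2 * walsh n (majority (g S1) (g S2) (g S3)) u" for u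
    using S by (simp add: walsh_majority g_def W_def walsh_coset_fun)
  then show ?thesis
    unfolding bent_iff_walsh[OF \<open>even n\<close>] by (simp add: abs_mult)
qed

lemma gbent_iff_bent_coset_funs:
  fixes a :: "nat \<Rightarrow> (nat \<Rightarrow> bool) \<Rightarrow> bool" and m :: nat
  assumes "even n"
  defines "g S \<equiv> restrV n (coset_fun a m S)"
  shows "gbent n (Suc m) (\<lambda>x. \<Sum>j<Suc m. 2 ^ j * of_bool (a j x)) \<longleftrightarrow>
    (\<forall>S\<subseteq>{..<m}. bent n (g S)) \<and>
    (\<forall>S1\<subseteq>{..<m}. \<forall>S2\<subseteq>{..<m}. \<forall>S3\<subseteq>{..<m}. bent n (majority (g S1) (g S2) (g S3)))"
proof -
  define W where "W u = hadamard m (fibre_walsh a m n u)" for u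
  have "gbent n (Suc m) (\<lambda>x. \<Sum>j<Suc m. 2 ^ j * of_bool (a j x)) \<longleftrightarrow>
      (\<forall>u\<in>Vn n. (\<forall>S\<subseteq>{..<m}. \<bar>W u S\<bar> = 2 ^ (n div 2)) \<and>
        (\<forall>S1\<subseteq>{..<m}. \<forall>S2\<subseteq>{..<m}. \<forall>S3\<subseteq>{..<m}.
           \<bar>W u S1 + W u S2 + W u S3 - W u (sym_diff (sym_diff S1 S2) S3)\<bar> = 2 * 2 ^ (n div 2)))"
    unfolding W_def gbent_iff_signed_point_mass[OF \<open>even n\<close>]
    by (simp add: signed_point_mass_iff_hadamard)
  also have "\<dots> \<longleftrightarrow> (\<forall>S\<subseteq>{..<m}. \<forall>u\<in>Vn n. \<bar>W u S\<bar> = 2 ^ (n div 2)) \<and>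
      (\<forall>S1\<subseteq>{..<m}. \<forall>S2\<subseteq>{..<m}. \<forall>S3\<subseteq>{..<m}. \<forall>u\<in>Vn n.
         \<bar>W u S1 + W u S2 + W u S3 - W u (sym_diff (sym_diff S1 S2) S3)\<bar> = 2 * 2 ^ (n div 2))"
    by auto
  also have "\<dots> \<longleftrightarrow> (\<forall>S\<subseteq>{..<m}. bent n (g S)) \<and>
      (\<forall>S1\<subseteq>{..<m}. \<forall>S2\<subseteq>{..<m}. \<forall>S3\<subseteq>{..<m}. bent n (majority (g S1) (g S2) (g S3)))"
    by (simp add: g_def W_def bent_coset_fun_iff[OF \<open>even n\<close>]
        bent_majority_coset_fun_iff[OF \<open>even n\<close>])
  finally show ?thesis .
qed

theorem corollary2:
  fixes n k :: nat and a :: "nat \<Rightarrow> (nat \<Rightarrow> bool) \<Rightarrow> bool"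
  assumes "even n" and "k \<ge> 2"
  shows "gbent n k (\<lambda>x. \<Sum>j<k. 2 ^ j * of_bool (a j x)) \<longleftrightarrow>
    (let A = xor_coset n (a (k - 1)) (span2 n a {..<k - 1}) in
      (\<forall>g\<in>A. bent n g) \<and>
      (\<forall>gi\<in>A. \<forall>gj\<in>A. \<forall>gl\<in>A. gi \<noteq> gj \<and> gi \<noteq> gl \<and> gj \<noteq> gl \<longrightarrow>
         bent n (\<lambda>x. (gi x \<and> gj x) \<noteq> ((gi x \<and> gl x) \<noteq> (gj x \<and> gl x)))))"
proof -
  obtain m where k: "k = Suc m" using \<open>k \<ge> 2\<close> by (cases k) auto
  define g where "g S = restrV n (coset_fun a m S)" for S
  have A: "xor_coset n (a (k - 1)) (span2 n a {..<k - 1}) = g ` Pow {..<m}"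
    unfolding k g_def by (auto simp: xor_coset_span2_eq)
  have "gbent n k (\<lambda>x. \<Sum>j<k. 2 ^ j * of_bool (a j x)) \<longleftrightarrow> (\<forall>f\<in>g ` Pow {..<m}. bent n f) \<and>
      (\<forall>f\<in>g ` Pow {..<m}. \<forall>f'\<in>g ` Pow {..<m}. \<forall>f''\<in>g ` Pow {..<m}. bent n (majority f f' f''))"
    unfolding k gbent_iff_bent_coset_funs[OF \<open>even n\<close>] Ball_image_comp comp_def
    by (simp add: Ball_def g_def)
  also have "\<dots> \<longleftrightarrow> (let A = xor_coset n (a (k - 1)) (span2 n a {..<k - 1}) in
      (\<forall>g\<in>A. bent n g) \<and>
      (\<forall>gi\<in>A. \<forall>gj\<in>A. \<forall>gl\<in>A. gi \<noteq> gj \<and> gi \<noteq> gl \<and> gj \<noteq> gl \<longrightarrow>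
         bent n (\<lambda>x. (gi x \<and> gj x) \<noteq> ((gi x \<and> gl x) \<noteq> (gj x \<and> gl x)))))"
    unfolding A Let_def majority_def
    by (rule conj_cong[OF refl], rule bent_majority_distinct_iff[unfolded majority_def, symmetric])
  finally show ?thesis .
qed

end
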